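(* Assume the ranking mechanism is consistent. Then for every $n\ge 1$, every CDF $K_n$ and every $t\in\mathbb R$, $$\mathbb E\big(F_{n;jps}(t)\big)=\frac1H\sum_{r=1}^H \mathbb E\big(K_n(t-X_{[r]})\big)=\mathbb E\big(K_n(t-X)\big)=\mathbb E\big(F_{n;srs}(t)\big).$$
   Context: Setting (judgment post stratification, JPS). Fix an integer set size $H\ge 2$ and a sample size $n\ge 1$. A JPS sample is a collection of $n$ i.i.d. pairs $(X_1,R_1),\dots,(X_n,R_n)$, where $R_i\in\{1,\dots,H\}$ with $P(R_i=r)=1/H$ for each $r$, and conditionally on $R_i=r$ the real random variable $X_i$ has CDF $F_{[r]}$; $X_{[r]}$ denotes a random variable with CDF $F_{[r]}$. Let $F$ be the population CDF and $X$ a random variable with CDF $F$. The ranking mechanism is called consistent if $F(t)=\frac1H\sum_{r=1}^H F_{[r]}(t)$ for all $t\in\mathbb R$ (so each $X_i$ has marginal CDF $F$). Define $I_{ir}=\mathbb I(R_i=r)$, $N_r=\sum_{i=1}^n I_{ir}$, $J_r=1/N_r$ if $N_r>0$ and $J_r=0$ otherwise, $d_n=\sum_{r=1}^H\mathbb I(N_r>0)$, and $W_r=\mathbb I(N_r>0)/d_n$. Given a CDF $K_n$ on $\mathbb R$, define $F_{n;[r]}(t)=\frac1{N_r}\sum_{i=1}^n K_n(t-X_i)I_{ir}$ if $N_r>0$ and $F_{n;[r]}(t)=0$ otherwise, and the JPS estimator $F_{n;jps}(t)=\sum_{r=1}^H W_rF_{n;[r]}(t)$. For an i.i.d. sample $X_1,\dots,X_n$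 from $F$ (simple random sample, SRS), the SRS estimator is $F_{n;srs}(t)=\frac1n\sum_{i=1}^n K_n(t-X_i)$. *)

theory Defs
  imports "HOL-Probability.Probability"
begin

definition is_cdf :: "(real \<Rightarrow> real) \<Rightarrow> bool" where
  "is_cdf G \<longleftrightarrow> mono G \<and> (\<forall>a. continuous (at_right a) G) \<and>
     (G \<longlongrightarrow> 0) at_bot \<and> (G \<longlongrightarrow> 1) at_top"

text \<open>Observed sample: values x i and judgment ranks R i for i < n.\<close>
definition jps_N :: "nat \<Rightarrow> (nat \<Rightarrow> nat) \<Rightarrow> nat \<Rightarrow> nat" where
  "jps_N n R r = card {i\<in>{..<n}. R i = r}"

definition jps_d :: "nat \<Rightarrow> nat \<Rightarrow> (nat \<Rightarrow> nat) \<Rightarrow> nat" where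
  "jps_d H n R = card {r\<in>{1..H}. jps_N n R r > 0}"

definition jps_W :: "nat \<Rightarrow> nat \<Rightarrow> (nat \<Rightarrow> nat) \<Rightarrow> nat \<Rightarrow> real" where
  "jps_W H n R r = (if jps_N n R r > 0 then 1 / real (jps_d H n R) else 0)"

definition jps_stratum :: "nat \<Rightarrow> (real \<Rightarrow> real) \<Rightarrow> (nat \<Rightarrow> real) \<Rightarrow> (nat \<Rightarrow> nat) \<Rightarrow> nat \<Rightarrow> real \<Rightarrow> real" where
  "jps_stratum n K x R r t =
     (if jps_N n R r > 0
      then (1 / real (jps_N n R r)) * (\<Sum>i<n. K (t - x i) * (if R i = r then 1 else 0))
      else 0)"

definition jps_est :: "nat \<Rightarrow> nat \<Rightarrow> (real \<Rightarrow> real) \<Rightarrow> (nat \<Rightarrow> real) \<Rightarrow> (nat \<Rightarrow> nat) \<Rightarrow> real \<Rightarrow> real" where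
  "jps_est H n K x R t = (\<Sum>r=1..H. jps_W H n R r * jps_stratum n K x R r t)"

definition srs_est :: "nat \<Rightarrow> (real \<Rightarrow> real) \<Rightarrow> (nat \<Rightarrow> real) \<Rightarrow> real \<Rightarrow> real" where
  "srs_est n K y t = (1 / real n) * (\<Sum>i<n. K (t - y i))"

end

theory Submission
  imports Defs "HOL-Combinatorics.Transposition"
begin

text \<open>Conditionally on the rank vector rho, the observations are independent with X_i ~ F_[rho i],
  so the conditional mean of F_{n;jps}(t) is sum_r W_r(rho) E K(t - X_[r]). The rank vector is
  uniform on {1..H}^n, and relabelling two strata is a bijection of rank vectors exchanging their
  weights; since sum_r W_r(rho) = 1, every W_r has mean 1/H. The other two equalities are linearity
  plus consistency: each X_i has CDF F = (1/H) sum_r F_[r].\<close>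

section \<open>Weights of the JPS estimator\<close>

lemma jps_N_cong:
  assumes "\<And>i. i < n \<Longrightarrow> \<rho> i = \<rho>' i"
  shows "jps_N n \<rho> = jps_N n \<rho>'"
  unfolding jps_N_def using assms by (intro ext arg_cong[where f=card]) auto

lemma jps_W_cong:
  assumes "\<And>i. i < n \<Longrightarrow> \<rho> i = \<rho>' i"
  shows "jps_W H n \<rho> = jps_W H n \<rho>'"
proof -
  have N: "jps_N n \<rho> = jps_N n \<rho>'"
    by (rule jps_N_cong) (rule assms)
  show ?thesis
    unfolding jps_W_def jps_d_def N ..
qed

lemma jps_est_cong:
  assumes "\<And>i. i < n \<Longrightarrow> \<rho> i = \<rho>' i"
  shows "jps_est H n K x \<rho> t = jps_est H n K x \<rho>' t"
  using jps_N_cong[OF assms] assms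
  unfolding jps_est_def jps_W_def jps_d_def jps_stratum_def by (auto intro!: sum.cong)

lemma jps_N_eq_sum: "jps_N n \<rho> r = (\<Sum>i<n. if \<rho> i = r then 1 else 0)"
  unfolding jps_N_def by (simp add: sum.If_cases Int_def conj_commute)

lemma jps_d_eq_sum: "jps_d H n \<rho> = (\<Sum>r=1..H. if jps_N n \<rho> r > 0 then 1 else 0)"
  unfolding jps_d_def by (simp add: sum.If_cases Int_def conj_commute)

lemma sum_jps_W_eq_1:
  assumes "n \<ge> 1" and "\<And>i. i < n \<Longrightarrow> \<rho> i \<in> {1..H}"
  shows "(\<Sum>r=1..H. jps_W H n \<rho> r) = 1"
proof -
  have "jps_N n \<rho> (\<rho> 0) > 0"
    using assms(1) unfolding jps_N_def by (auto simp: card_gt_0_iff intro!: exI[of _ 0])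
  with assms have "jps_d H n \<rho> > 0"
    unfolding jps_d_def by (auto simp: card_gt_0_iff)
  moreover have "(\<Sum>r=1..H. jps_W H n \<rho> r) = real (jps_d H n \<rho>) * (1 / real (jps_d H n \<rho>))"
    unfolding jps_W_def jps_d_def by (simp add: sum.If_cases Int_def conj_commute)
  ultimately show ?thesis by simp
qed

definition jps_weight :: "nat \<Rightarrow> nat \<Rightarrow> (nat \<Rightarrow> nat) \<Rightarrow> nat \<Rightarrow> real" where
  "jps_weight H n \<rho> i = jps_W H n \<rho> (\<rho> i) / real (jps_N n \<rho> (\<rho> i))"

lemma sum_jps_weight_by_stratum:
  assumes "\<And>i. i < n \<Longrightarrow> \<rho> i \<in> {1..H}"
  shows "(\<Sum>i<n. jps_weight H n \<rho> i * b i)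
       = (\<Sum>r=1..H. jps_W H n \<rho> r / real (jps_N n \<rho> r) * (\<Sum>i<n. b i * (if \<rho> i = r then 1 else 0)))"
proof -
  have "(\<Sum>i<n. jps_weight H n \<rho> i * b i)
      = (\<Sum>r=1..H. \<Sum>i\<in>{i \<in> {..<n}. \<rho> i = r}. jps_weight H n \<rho> i * b i)"
    using assms by (intro sum.group[symmetric]) auto
  also have "\<dots> = (\<Sum>r=1..H. \<Sum>i\<in>{i \<in> {..<n}. \<rho> i = r}. jps_W H n \<rho> r / real (jps_N n \<rho> r) * b i)"
    by (intro sum.cong refl) (simp add: jps_weight_def)
  also have "\<dots> = (\<Sum>r=1..H. jps_W H n \<rho> r / real (jps_N n \<rho> r) * (\<Sum>i<n. b i * (if \<rho> i = r then 1 else 0)))"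
    unfolding sum.inter_filter[OF finite_lessThan] sum_distrib_left by (intro sum.cong refl) simp
  finally show ?thesis .
qed

lemma jps_est_eq_sum_jps_weight:
  assumes "\<And>i. i < n \<Longrightarrow> \<rho> i \<in> {1..H}"
  shows "jps_est H n K x \<rho> t = (\<Sum>i<n. jps_weight H n \<rho> i * K (t - x i))"
proof -
  have "jps_est H n K x \<rho> t
      = (\<Sum>r=1..H. jps_W H n \<rho> r / real (jps_N n \<rho> r) * (\<Sum>i<n. K (t - x i) * (if \<rho> i = r then 1 else 0)))"
    unfolding jps_est_def jps_stratum_def jps_W_def by (intro sum.cong) auto
  then show ?thesis
    by (simp add: sum_jps_weight_by_stratum[OF assms])
qed

lemma sum_jps_weight_stratumwise:
  assumes "\<And>i. i < n \<Longrightarrow> \<rho> i \<in> {1..H}"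
  shows "(\<Sum>i<n. jps_weight H n \<rho> i * a (\<rho> i)) = (\<Sum>r=1..H. jps_W H n \<rho> r * a r)"
proof -
  have "jps_W H n \<rho> r / real (jps_N n \<rho> r) * (\<Sum>i<n. a (\<rho> i) * (if \<rho> i = r then 1 else 0))
      = jps_W H n \<rho> r * a r" for r
  proof -
    have "(\<Sum>i<n. a (\<rho> i) * (if \<rho> i = r then 1 else 0)) = a r * real (jps_N n \<rho> r)"
      by (simp add: jps_N_eq_sum sum_distrib_left if_distrib cong: if_cong)
    then show ?thesis by (simp add: jps_W_def)
  qed
  then show ?thesis by (simp add: sum_jps_weight_by_stratum[OF assms])
qed

lemma jps_N_comp:
  assumes "inj \<pi>"
  shows "jps_N n (\<pi> \<circ> \<rho>) (\<pi> r) = jps_N n \<rho> r"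
  unfolding jps_N_def by (simp add: inj_eq[OF assms])

lemma jps_d_comp:
  assumes "inj \<pi>" and "\<pi> ` {1..H} = {1..H}"
  shows "jps_d H n (\<pi> \<circ> \<rho>) = jps_d H n \<rho>"
proof -
  have "{r\<in>{1..H}. jps_N n (\<pi> \<circ> \<rho>) r > 0} = \<pi> ` {r\<in>{1..H}. jps_N n \<rho> r > 0}"
  proof -
    have "{r\<in>{1..H}. jps_N n (\<pi> \<circ> \<rho>) r > 0} = {r\<in>\<pi> ` {1..H}. jps_N n (\<pi> \<circ> \<rho>) r > 0}"
      using assms(2) by simp
    also have "\<dots> = \<pi> ` {r\<in>{1..H}. jps_N n (\<pi> \<circ> \<rho>) (\<pi> r) > 0}"
      by blast
    finally show ?thesis by (simp add: jps_N_comp[OF assms(1)])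
  qed
  then show ?thesis
    unfolding jps_d_def using assms(1) by (simp add: card_image inj_on_subset)
qed

lemma jps_W_comp:
  assumes "inj \<pi>" and "\<pi> ` {1..H} = {1..H}"
  shows "jps_W H n (\<pi> \<circ> \<rho>) (\<pi> r) = jps_W H n \<rho> r"
  unfolding jps_W_def jps_N_comp[OF assms(1)] jps_d_comp[OF assms] ..

text \<open>Swapping the labels \<open>r\<close> and \<open>r'\<close> is a bijection of rank vectors that exchanges
  the weights of the two strata.\<close>

lemma sum_jps_W_stratum_invariant:
  assumes r: "r \<in> {1..H}" and r': "r' \<in> {1..H}"
  shows "(\<Sum>\<rho>\<in>PiE {..<n} (\<lambda>_. {1..H}). jps_W H n \<rho> r)
       = (\<Sum>\<rho>\<in>PiE {..<n} (\<lambda>_. {1..H}). jps_W H n \<rho> r')"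
proof -
  let ?P = "PiE {..<n} (\<lambda>_. {1..H::nat})"
  define \<tau> where "\<tau> = Transposition.transpose r r'"
  define T where "T \<rho> = restrict (\<tau> \<circ> \<rho>) {..<n}" for \<rho> :: "nat \<Rightarrow> nat"
  have \<tau>: "inj \<tau>" "\<tau> ` {1..H} = {1..H}"
    using r r' by (simp_all add: \<tau>_def inj_transpose)
  then have "T \<rho> \<in> ?P" if "\<rho> \<in> ?P" for \<rho>
    using that by (auto simp: T_def PiE_iff image_subset_iff[symmetric] simp del: atLeastAtMost_iff)
  moreover have "T (T \<rho>) = \<rho>" if "\<rho> \<in> ?P" for \<rho>
    using that by (auto simp: T_def \<tau>_def PiE_iff extensional_def fun_eq_iff)
  ultimately have "bij_betw T ?P ?P"
    by (intro bij_betwI[where g=T]) auto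
  then have "(\<Sum>\<rho>\<in>?P. jps_W H n \<rho> r') = (\<Sum>\<rho>\<in>?P. jps_W H n (T \<rho>) r')"
    by (rule sum.reindex_bij_betw[symmetric])
  also have "\<dots> = (\<Sum>\<rho>\<in>?P. jps_W H n \<rho> r)"
  proof (rule sum.cong[OF refl])
    fix \<rho>
    have "jps_W H n (T \<rho>) = jps_W H n (\<tau> \<circ> \<rho>)"
      by (rule jps_W_cong) (simp add: T_def)
    moreover have "\<tau> r = r'"
      by (simp add: \<tau>_def)
    ultimately show "jps_W H n (T \<rho>) r' = jps_W H n \<rho> r"
      using jps_W_comp[OF \<tau>] by metis
  qed
  finally show ?thesis ..
qed

lemma sum_jps_W_PiE:
  assumes "n \<ge> 1" and r: "r \<in> {1..H}"
  shows "(\<Sum>\<rho>\<in>PiE {..<n} (\<lambda>_. {1..H}). jps_W H n \<rho> r) = real H ^ n / real H"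
proof -
  let ?P = "PiE {..<n} (\<lambda>_. {1..H::nat})"
  have "real H * (\<Sum>\<rho>\<in>?P. jps_W H n \<rho> r) = (\<Sum>r'=1..H. \<Sum>\<rho>\<in>?P. jps_W H n \<rho> r')"
    using sum_jps_W_stratum_invariant[OF _ r] by simp
  also have "\<dots> = (\<Sum>\<rho>\<in>?P. \<Sum>r'=1..H. jps_W H n \<rho> r')"
    by (rule sum.swap)
  also have "\<dots> = (\<Sum>\<rho>\<in>?P. 1)"
    by (intro sum.cong refl sum_jps_W_eq_1 assms(1)) (auto simp: PiE_iff)
  also have "\<dots> = real H ^ n"
    by (simp add: card_PiE)
  finally show ?thesis
    using r by (simp add: field_simps)
qed

lemma sum_PiE_indicator_eq:
  fixes n :: nat
  assumes "finite A" and "\<And>j. j < n \<Longrightarrow> g j \<in> A"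
  shows "(\<Sum>\<rho>\<in>PiE {..<n} (\<lambda>_. A). (if \<forall>j<n. g j = \<rho> j then 1 else 0) * \<Phi> \<rho>)
       = (\<Phi> (restrict g {..<n}) :: real)"
proof -
  have "(\<forall>j<n. g j = \<rho> j) \<longleftrightarrow> restrict g {..<n} = \<rho>" if "\<rho> \<in> PiE {..<n} (\<lambda>_. A)" for \<rho>
    using that by (auto simp: PiE_iff extensional_def fun_eq_iff)
  then have "(\<Sum>\<rho>\<in>PiE {..<n} (\<lambda>_. A). (if \<forall>j<n. g j = \<rho> j then 1 else 0) * \<Phi> \<rho>)
      = (\<Sum>\<rho>\<in>PiE {..<n} (\<lambda>_. A). if restrict g {..<n} = \<rho> then \<Phi> \<rho> else 0)"
    by (intro sum.cong) auto
  also have "\<dots> = \<Phi> (restrict g {..<n})"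
  proof -
    have "finite (PiE {..<n} (\<lambda>_. A))"
      by (intro finite_PiE) (simp_all add: assms(1))
    moreover have "restrict g {..<n} \<in> PiE {..<n} (\<lambda>_. A)"
      using assms(2) by simp
    ultimately show ?thesis
      by (simp add: sum.delta')
  qed
  finally show ?thesis .
qed

section \<open>Distribution functions and laws\<close>

lemma real_distribution_interval_measure_is_cdf:
  "is_cdf G \<Longrightarrow> real_distribution (interval_measure G)"
  by (rule real_distribution_interval_measure) (auto simp: is_cdf_def mono_def)

lemma cdf_interval_measure_is_cdf: "is_cdf G \<Longrightarrow> cdf (interval_measure G) = G"
  by (rule cdf_interval_measure) (auto simp: is_cdf_def mono_def)

lemma measure_interval_measure_is_cdf_atMost:
  "is_cdf G \<Longrightarrow> measure (interval_measure G) {..s} = G s"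
  by (rule measure_interval_measure_Iic) (auto simp: is_cdf_def mono_def)

lemma abs_is_cdf_le_1:
  assumes "is_cdf G"
  shows "\<bar>G x\<bar> \<le> 1"
proof -
  interpret real_distribution "interval_measure G"
    using assms by (rule real_distribution_interval_measure_is_cdf)
  show ?thesis
    using cdf_nonneg[of x] cdf_bounded_prob[of x] by (simp add: cdf_interval_measure_is_cdf[OF assms])
qed

lemma borel_measurable_is_cdf: "is_cdf G \<Longrightarrow> G \<in> borel_measurable borel"
  by (rule borel_measurable_mono) (simp add: is_cdf_def)

lemma integral_interval_measure_eq_weighted:
  fixes M :: "'a measure" and X g :: "'a \<Rightarrow> real" and f :: "real \<Rightarrow> real"
  assumes G: "is_cdf G"
    and [measurable]: "X \<in> borel_measurable M" "g \<in> borel_measurable M"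
    and g_nonneg: "\<And>\<omega>. 0 \<le> g \<omega>" and g_int: "integrable M g"
    and law: "\<And>s. (\<integral>\<omega>. g \<omega> * indicator {..s} (X \<omega>) \<partial>M) = G s"
    and [measurable]: "f \<in> borel_measurable borel"
  shows "(\<integral>x. f x \<partial>interval_measure G) = (\<integral>\<omega>. g \<omega> * f (X \<omega>) \<partial>M)"
proof -
  define \<nu> where "\<nu> = distr (density M g) borel X"
  have sets_\<nu>: "sets \<nu> = sets borel"
    by (simp add: \<nu>_def)
  have integral_\<nu>: "(\<integral>x. h x \<partial>\<nu>) = (\<integral>\<omega>. g \<omega> * h (X \<omega>) \<partial>M)"
    if [measurable]: "h \<in> borel_measurable borel" for h :: "real \<Rightarrow> real"
    unfolding \<nu>_def by (subst integral_distr) (auto simp: integral_density g_nonneg)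
  have "emeasure (density M g) (space M) = (\<integral>\<^sup>+\<omega>. ennreal (g \<omega>) \<partial>M)"
    by (subst emeasure_density) (auto intro!: nn_integral_cong)
  also have "\<dots> = ennreal (\<integral>\<omega>. g \<omega> \<partial>M)"
    using g_int g_nonneg by (intro nn_integral_eq_integral) auto
  finally have "emeasure \<nu> (space \<nu>) \<noteq> \<infinity>"
    by (simp add: \<nu>_def emeasure_distr)
  then interpret \<nu>: finite_measure \<nu>
    by (rule finite_measureI)
  have fbm_\<nu>: "finite_borel_measure \<nu>"
    by (intro finite_borel_measure.intro \<nu>.finite_measure_axioms) (unfold_locales, simp add: sets_\<nu>)
  have cdf_\<nu>: "cdf \<nu> = G"
  proof
    fix s
    have "cdf \<nu> s = (\<integral>x. indicator {..s} x \<partial>\<nu>)"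
      by (simp add: cdf_def sets_\<nu> sets_eq_imp_space_eq[OF sets_\<nu>])
    also have "\<dots> = (\<integral>\<omega>. g \<omega> * indicator {..s} (X \<omega>) \<partial>M)"
      by (rule integral_\<nu>) simp
    finally show "cdf \<nu> s = G s"
      by (simp add: law)
  qed
  have "interval_measure G = \<nu>"
    using real_distribution.finite_borel_measure_M[OF real_distribution_interval_measure_is_cdf[OF G]] fbm_\<nu>
    by (rule cdf_unique') (simp add: cdf_\<nu> cdf_interval_measure_is_cdf[OF G])
  then show ?thesis
    using integral_\<nu>[of f] by simp
qed

lemma integral_indicator_atMost_comp:
  "(\<integral>\<omega>. indicator {..s} (X \<omega>) \<partial>M) = measure M {\<omega> \<in> space M. X \<omega> \<le> s}"
proof -
  have "(\<integral>\<omega>. indicator {..s} (X \<omega>) \<partial>M) = (\<integral>\<omega>. indicator {\<omega> \<in> space M. X \<omega> \<le> s} \<omega> \<partial>M :: real)"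
    by (intro Bochner_Integration.integral_cong) (auto simp: indicator_def)
  then show ?thesis
    by (simp add: Int_absorb2)
qed

lemma (in prob_space) integral_interval_measure_eq_law:
  fixes f :: "real \<Rightarrow> real"
  assumes G: "is_cdf G" and [measurable]: "X \<in> borel_measurable M" "f \<in> borel_measurable borel"
    and law: "\<And>s. prob {\<omega> \<in> space M. X \<omega> \<le> s} = G s"
  shows "(\<integral>x. f x \<partial>interval_measure G) = (\<integral>\<omega>. f (X \<omega>) \<partial>M)"
  using integral_interval_measure_eq_weighted[OF G, of X M "\<lambda>_. 1" f]
  by (simp add: integral_indicator_atMost_comp law)

section \<open>Expectations of the estimators\<close>

lemma borel_measurable_jps_est:
  fixes X :: "nat \<Rightarrow> 'a \<Rightarrow> real"
  assumes [measurable]: "\<And>i. i < n \<Longrightarrow> X i \<in> borel_measurable M"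
    "\<And>i. i < n \<Longrightarrow> R i \<in> M \<rightarrow>\<^sub>M count_space UNIV" "K \<in> borel_measurable borel"
  shows "(\<lambda>\<omega>. jps_est H n K (\<lambda>i. X i \<omega>) (\<lambda>i. R i \<omega>) t) \<in> borel_measurable M"
  unfolding jps_est_def jps_W_def jps_stratum_def jps_d_eq_sum jps_N_eq_sum by measurable

lemma integral_srs_est:
  assumes "prob_space N" and n: "n \<ge> 1" and F: "is_cdf F"
    and [measurable]: "\<And>i. i < n \<Longrightarrow> Y i \<in> borel_measurable N"
    and law_SRS: "\<And>i s. i < n \<Longrightarrow> measure N {\<omega> \<in> space N. Y i \<omega> \<le> s} = F s"
    and [measurable]: "K \<in> borel_measurable borel" and K_bound: "\<And>x. \<bar>K x\<bar> \<le> B"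
  shows "(\<integral>\<omega>. srs_est n K (\<lambda>i. Y i \<omega>) t \<partial>N) = (\<integral>x. K (t - x) \<partial>interval_measure F)"
proof -
  interpret N: prob_space N by fact
  have int: "integrable N (\<lambda>\<omega>. K (t - Y i \<omega>))" if "i < n" for i
    using that K_bound by (intro N.integrable_const_bound[where B=B]) auto
  have law: "(\<integral>\<omega>. K (t - Y i \<omega>) \<partial>N) = (\<integral>x. K (t - x) \<partial>interval_measure F)" if "i < n" for i
    by (rule N.integral_interval_measure_eq_law[OF F, symmetric]) (use that law_SRS in simp_all)
  have "(\<integral>\<omega>. srs_est n K (\<lambda>i. Y i \<omega>) t \<partial>N) = (1 / real n) * (\<Sum>i<n. \<integral>\<omega>. K (t - Y i \<omega>) \<partial>N)"
    unfolding srs_est_def using int by (subst integral_mult_right_zero, subst Bochner_Integration.integral_sum) auto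
  also have "\<dots> = (1 / real n) * (\<Sum>i<n. \<integral>x. K (t - x) \<partial>interval_measure F)"
    by (intro arg_cong[where f="(*) _"] sum.cong) (simp_all add: law)
  also have "\<dots> = (\<integral>x. K (t - x) \<partial>interval_measure F)"
    using n by simp
  finally show ?thesis .
qed

locale jps_sample = prob_space M for M :: "'a measure" +
  fixes H n :: nat and X :: "nat \<Rightarrow> 'a \<Rightarrow> real" and R :: "nat \<Rightarrow> 'a \<Rightarrow> nat"
    and Fr :: "nat \<Rightarrow> real \<Rightarrow> real"
  assumes H_pos: "0 < H"
    and cdf_Fr: "\<And>r. r \<in> {1..H} \<Longrightarrow> is_cdf (Fr r)"
    and indep_JPS: "indep_vars (\<lambda>_. borel \<Otimes>\<^sub>M count_space UNIV) (\<lambda>i \<omega>. (X i \<omega>, R i \<omega>)) {..<n}"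
    and R_range: "\<And>i. i < n \<Longrightarrow> prob {\<omega> \<in> space M. R i \<omega> \<in> {1..H}} = 1"
    and law_JPS: "\<And>i r s. i < n \<Longrightarrow> r \<in> {1..H} \<Longrightarrow>
                     prob {\<omega> \<in> space M. X i \<omega> \<le> s \<and> R i \<omega> = r} = Fr r s / real H"
begin

lemma measurable_XR:
  "i < n \<Longrightarrow> (\<lambda>\<omega>. (X i \<omega>, R i \<omega>)) \<in> M \<rightarrow>\<^sub>M borel \<Otimes>\<^sub>M count_space UNIV"
  using indep_JPS by (auto simp: indep_vars_def)

lemma measurable_X [measurable]: "i < n \<Longrightarrow> X i \<in> borel_measurable M"
  using measurable_compose[OF measurable_XR measurable_fst] by (simp add: comp_def)

lemma measurable_R [measurable]: "i < n \<Longrightarrow> R i \<in> M \<rightarrow>\<^sub>M count_space UNIV"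
  using measurable_compose[OF measurable_XR measurable_snd] by (simp add: comp_def)

lemma AE_R_range: "AE \<omega> in M. \<forall>i<n. R i \<omega> \<in> {1..H}"
proof -
  have "AE \<omega> in M. \<forall>i\<in>{..<n}. \<omega> \<in> {\<omega> \<in> space M. R i \<omega> \<in> {1..H}}"
    by (intro AE_finite_allI AE_prob_1 R_range) simp_all
  then show ?thesis
    by eventually_elim auto
qed

lemma integral_stratum:
  fixes f :: "real \<Rightarrow> real"
  assumes i: "i < n" and r: "r \<in> {1..H}" and [measurable]: "f \<in> borel_measurable borel"
  shows "(\<integral>\<omega>. (if R i \<omega> = r then 1 else 0) * f (X i \<omega>) \<partial>M)
       = (\<integral>x. f x \<partial>interval_measure (Fr r)) / real H"
proof -
  define g where "g \<omega> = real H * (if R i \<omega> = r then 1 else 0)" for \<omega>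
  have [measurable]: "g \<in> borel_measurable M"
    unfolding g_def using i by measurable
  have "(\<integral>\<omega>. g \<omega> * indicator {..s} (X i \<omega>) \<partial>M) = Fr r s" for s
  proof -
    have "(\<integral>\<omega>. g \<omega> * indicator {..s} (X i \<omega>) \<partial>M)
        = (\<integral>\<omega>. real H * indicator {\<omega> \<in> space M. X i \<omega> \<le> s \<and> R i \<omega> = r} \<omega> \<partial>M)"
      by (intro Bochner_Integration.integral_cong) (auto simp: g_def indicator_def)
    also have "\<dots> = Fr r s"
      using i law_JPS[OF i r] H_pos by (simp add: Int_absorb2)
    finally show ?thesis .
  qed
  then have "(\<integral>x. f x \<partial>interval_measure (Fr r)) = (\<integral>\<omega>. g \<omega> * f (X i \<omega>) \<partial>M)"
    using i by (intro integral_interval_measure_eq_weighted[OF cdf_Fr[OF r]])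
      (auto simp: g_def intro!: integrable_const_bound[where B="real H"])
  also have "\<dots> = real H * (\<integral>\<omega>. (if R i \<omega> = r then 1 else 0) * f (X i \<omega>) \<partial>M)"
    by (simp add: g_def mult.assoc)
  finally show ?thesis
    using H_pos by (simp add: field_simps)
qed

lemma integral_rank:
  assumes "i < n" and "r \<in> {1..H}"
  shows "(\<integral>\<omega>. (if R i \<omega> = r then 1 else 0) \<partial>M) = 1 / real H"
proof -
  interpret Fr: real_distribution "interval_measure (Fr r)"
    using cdf_Fr[OF assms(2)] by (rule real_distribution_interval_measure_is_cdf)
  show ?thesis
    using integral_stratum[OF assms, of "\<lambda>_. 1"] Fr.prob_space by simp
qed

lemma integral_marginal:
  fixes f :: "real \<Rightarrow> real"
  assumes i: "i < n" and [measurable]: "f \<in> borel_measurable borel" and f_bound: "\<And>x. \<bar>f x\<bar> \<le> B"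
  shows "(\<integral>\<omega>. f (X i \<omega>) \<partial>M) = (1 / real H) * (\<Sum>r=1..H. \<integral>x. f x \<partial>interval_measure (Fr r))"
proof -
  have "0 \<le> B"
    using f_bound[of 0] by linarith
  then have int: "integrable M (\<lambda>\<omega>. (if R i \<omega> = r then 1 else 0) * f (X i \<omega>))" for r
    using i f_bound by (intro integrable_const_bound[where B=B]) auto
  have "(1 / real H) * (\<Sum>r=1..H. \<integral>x. f x \<partial>interval_measure (Fr r))
      = (\<Sum>r=1..H. \<integral>\<omega>. (if R i \<omega> = r then 1 else 0) * f (X i \<omega>) \<partial>M)"
    by (simp add: sum_distrib_left integral_stratum[OF i])
  also have "\<dots> = (\<integral>\<omega>. (\<Sum>r=1..H. (if R i \<omega> = r then 1 else 0) * f (X i \<omega>)) \<partial>M)"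
    using int by (simp add: Bochner_Integration.integral_sum)
  also have "\<dots> = (\<integral>\<omega>. f (X i \<omega>) \<partial>M)"
  proof (rule integral_cong_AE)
    have "(\<Sum>r=1..H. (if R i \<omega> = r then 1 else 0) * f (X i \<omega>)) = f (X i \<omega>)"
      if "R i \<omega> \<in> {1..H}" for \<omega>
    proof -
      have "(\<Sum>r=1..H. (if R i \<omega> = r then 1 else 0) * f (X i \<omega>))
          = (\<Sum>r=1..H. if R i \<omega> = r then f (X i \<omega>) else 0)"
        by (intro sum.cong) auto
      then show ?thesis
        using that by simp
    qed
    then show "AE \<omega> in M. (\<Sum>r=1..H. (if R i \<omega> = r then 1 else 0) * f (X i \<omega>)) = f (X i \<omega>)"
      using AE_R_range i by auto
  qed (use i in measurable)
  finally show ?thesis ..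
qed

text \<open>The sample supplies a random variable with CDF \<open>F\<close>, which identifies
  \<open>interval_measure F\<close> with the equal-weight mixture of the stratum laws.\<close>

lemma integral_interval_measure_mixture:
  fixes f :: "real \<Rightarrow> real"
  assumes n: "0 < n" and F: "is_cdf F" and consistent: "\<And>s. F s = (1 / real H) * (\<Sum>r=1..H. Fr r s)"
    and [measurable]: "f \<in> borel_measurable borel" and f_bound: "\<And>x. \<bar>f x\<bar> \<le> B"
  shows "(\<integral>x. f x \<partial>interval_measure F) = (1 / real H) * (\<Sum>r=1..H. \<integral>x. f x \<partial>interval_measure (Fr r))"
proof -
  have "prob {\<omega> \<in> space M. X 0 \<omega> \<le> s} = F s" for s
  proof -
    have "prob {\<omega> \<in> space M. X 0 \<omega> \<le> s} = (\<integral>\<omega>. indicator {..s} (X 0 \<omega>) \<partial>M)"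
      by (simp add: integral_indicator_atMost_comp)
    also have "\<dots> = (1 / real H) * (\<Sum>r=1..H. \<integral>x. indicator {..s} x \<partial>interval_measure (Fr r))"
      using n by (intro integral_marginal[where B=1]) auto
    also have "\<dots> = (1 / real H) * (\<Sum>r=1..H. Fr r s)"
      by (intro arg_cong[where f="(*) _"] sum.cong refl)
        (simp add: measure_interval_measure_is_cdf_atMost cdf_Fr)
    finally show ?thesis
      by (simp add: consistent)
  qed
  then have "(\<integral>x. f x \<partial>interval_measure F) = (\<integral>\<omega>. f (X 0 \<omega>) \<partial>M)"
    using n by (intro integral_interval_measure_eq_law[OF F]) auto
  also have "\<dots> = (1 / real H) * (\<Sum>r=1..H. \<integral>x. f x \<partial>interval_measure (Fr r))"
    using n f_bound by (intro integral_marginal) auto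
  finally show ?thesis .
qed

lemma integral_prod_indep:
  fixes \<phi> :: "nat \<Rightarrow> real \<times> nat \<Rightarrow> real"
  assumes \<phi>: "\<And>j. j < n \<Longrightarrow> \<phi> j \<in> borel_measurable (borel \<Otimes>\<^sub>M count_space UNIV)"
    and \<phi>_bound: "\<And>j p. \<bar>\<phi> j p\<bar> \<le> B"
  shows "(\<integral>\<omega>. (\<Prod>j<n. \<phi> j (X j \<omega>, R j \<omega>)) \<partial>M) = (\<Prod>j<n. \<integral>\<omega>. \<phi> j (X j \<omega>, R j \<omega>) \<partial>M)"
proof -
  have "indep_vars (\<lambda>_. borel) (\<lambda>j \<omega>. \<phi> j (X j \<omega>, R j \<omega>)) {..<n}"
    using \<phi> by (intro indep_vars_compose2[OF indep_JPS]) auto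
  moreover have "integrable M (\<lambda>\<omega>. \<phi> j (X j \<omega>, R j \<omega>))" if "j \<in> {..<n}" for j
    using that \<phi>_bound measurable_compose[OF measurable_XR \<phi>]
    by (intro integrable_const_bound[where B=B]) auto
  ultimately show ?thesis
    by (intro indep_vars_lebesgue_integral) auto
qed

lemma integral_rank_pattern:
  fixes f :: "real \<Rightarrow> real"
  assumes i: "i < n" and \<rho>: "\<rho> \<in> PiE {..<n} (\<lambda>_. {1..H})"
    and [measurable]: "f \<in> borel_measurable borel" and f_bound: "\<And>x. \<bar>f x\<bar> \<le> B"
  shows "(\<integral>\<omega>. (if \<forall>j<n. R j \<omega> = \<rho> j then 1 else 0) * f (X i \<omega>) \<partial>M)
       = (\<integral>x. f x \<partial>interval_measure (Fr (\<rho> i))) / real H ^ n"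
proof -
  define \<phi> where "\<phi> j p = (if snd p = \<rho> j then 1 else 0) * (if j = i then f (fst p) else 1)"
    for j and p :: "real \<times> nat"
  have \<rho>_mem: "\<rho> j \<in> {1..H}" if "j < n" for j
    using \<rho> that by (simp add: PiE_iff)
  have prod_\<phi>: "(if \<forall>j<n. R j \<omega> = \<rho> j then 1 else 0) * f (X i \<omega>) = (\<Prod>j<n. \<phi> j (X j \<omega>, R j \<omega>))"
    for \<omega>
  proof -
    have "(\<Prod>j<n. if R j \<omega> = \<rho> j then 1 else 0 :: real) = (if \<forall>j<n. R j \<omega> = \<rho> j then 1 else 0)"
      by (auto simp: prod_zero_iff intro!: prod.neutral)
    moreover have "(\<Prod>j<n. if j = i then f (X j \<omega>) else 1) = f (X i \<omega>)"
      using i by (simp add: prod.delta)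
    ultimately show ?thesis
      using i by (simp add: \<phi>_def prod.distrib)
  qed
  have \<phi>_bound: "\<bar>\<phi> j p\<bar> \<le> max 1 B" for j p
    using f_bound[of "fst p"] by (auto simp: \<phi>_def)
  have \<phi>_meas: "\<phi> j \<in> borel_measurable (borel \<Otimes>\<^sub>M count_space UNIV)" for j
    unfolding \<phi>_def by measurable
  have "(\<integral>\<omega>. (if \<forall>j<n. R j \<omega> = \<rho> j then 1 else 0) * f (X i \<omega>) \<partial>M)
      = (\<integral>\<omega>. (\<Prod>j<n. \<phi> j (X j \<omega>, R j \<omega>)) \<partial>M)"
    by (simp only: prod_\<phi>)
  also have "\<dots> = (\<Prod>j<n. \<integral>\<omega>. \<phi> j (X j \<omega>, R j \<omega>) \<partial>M)"
    by (rule integral_prod_indep[OF \<phi>_meas \<phi>_bound])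
  also have "\<dots> = (\<integral>\<omega>. \<phi> i (X i \<omega>, R i \<omega>) \<partial>M) * (\<Prod>j\<in>{..<n} - {i}. \<integral>\<omega>. \<phi> j (X j \<omega>, R j \<omega>) \<partial>M)"
    using i by (subst prod.remove[of _ i]) auto
  also have "\<dots> = (\<integral>x. f x \<partial>interval_measure (Fr (\<rho> i))) / real H * (\<Prod>j\<in>{..<n} - {i}. 1 / real H)"
    using integral_stratum[OF i \<rho>_mem[OF i]] integral_rank[OF _ \<rho>_mem] by (simp add: \<phi>_def)
  also have "\<dots> = (\<integral>x. f x \<partial>interval_measure (Fr (\<rho> i))) / real H ^ n"
    using i by (cases n) (simp_all add: power_one_over field_simps)
  finally show ?thesis .
qed

lemma AE_jps_est_eq_sum_rank_patterns:
  "AE \<omega> in M. jps_est H n K (\<lambda>i. X i \<omega>) (\<lambda>i. R i \<omega>) t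
     = (\<Sum>\<rho>\<in>PiE {..<n} (\<lambda>_. {1..H}). \<Sum>i<n.
          jps_weight H n \<rho> i * ((if \<forall>j<n. R j \<omega> = \<rho> j then 1 else 0) * K (t - X i \<omega>)))"
  using AE_R_range
proof eventually_elim
  case (elim \<omega>)
  have "(\<Sum>\<rho>\<in>PiE {..<n} (\<lambda>_. {1..H}). \<Sum>i<n.
          jps_weight H n \<rho> i * ((if \<forall>j<n. R j \<omega> = \<rho> j then 1 else 0) * K (t - X i \<omega>)))
      = (\<Sum>\<rho>\<in>PiE {..<n} (\<lambda>_. {1..H}).
          (if \<forall>j<n. R j \<omega> = \<rho> j then 1 else 0) * jps_est H n K (\<lambda>i. X i \<omega>) \<rho> t)"
  proof (rule sum.cong[OF refl])
    fix \<rho> assume "\<rho> \<in> PiE {..<n} (\<lambda>_. {1..H})"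
    then have "jps_est H n K (\<lambda>i. X i \<omega>) \<rho> t = (\<Sum>i<n. jps_weight H n \<rho> i * K (t - X i \<omega>))"
      by (intro jps_est_eq_sum_jps_weight) (simp add: PiE_iff)
    then show "(\<Sum>i<n. jps_weight H n \<rho> i * ((if \<forall>j<n. R j \<omega> = \<rho> j then 1 else 0) * K (t - X i \<omega>)))
        = (if \<forall>j<n. R j \<omega> = \<rho> j then 1 else 0) * jps_est H n K (\<lambda>i. X i \<omega>) \<rho> t"
      by (cases "\<forall>j<n. R j \<omega> = \<rho> j") simp_all
  qed
  also have "\<dots> = jps_est H n K (\<lambda>i. X i \<omega>) (restrict (\<lambda>j. R j \<omega>) {..<n}) t"
    by (rule sum_PiE_indicator_eq) (use elim in auto)
  also have "\<dots> = jps_est H n K (\<lambda>i. X i \<omega>) (\<lambda>i. R i \<omega>) t"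
    by (rule jps_est_cong) simp
  finally show ?case ..
qed

lemma integral_jps_est:
  assumes n: "n \<ge> 1" and [measurable]: "K \<in> borel_measurable borel" and K_bound: "\<And>x. \<bar>K x\<bar> \<le> B"
  shows "(\<integral>\<omega>. jps_est H n K (\<lambda>i. X i \<omega>) (\<lambda>i. R i \<omega>) t \<partial>M)
       = (1 / real H) * (\<Sum>r=1..H. \<integral>x. K (t - x) \<partial>interval_measure (Fr r))"
proof -
  let ?P = "PiE {..<n} (\<lambda>_. {1..H})"
  let ?ind = "\<lambda>\<rho> \<omega>. if \<forall>j<n. R j \<omega> = \<rho> j then 1 else 0 :: real"
  define \<mu> where "\<mu> r = (\<integral>x. K (t - x) \<partial>interval_measure (Fr r))" for r
  have Kt: "(\<lambda>x. K (t - x)) \<in> borel_measurable borel"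
    by measurable
  have "0 \<le> B"
    using K_bound[of 0] by linarith
  then have int: "integrable M (\<lambda>\<omega>. ?ind \<rho> \<omega> * K (t - X i \<omega>))" if "i < n" for \<rho> i
    using that K_bound by (intro integrable_const_bound[where B=B]) auto
  have "(\<integral>\<omega>. jps_est H n K (\<lambda>i. X i \<omega>) (\<lambda>i. R i \<omega>) t \<partial>M)
      = (\<integral>\<omega>. (\<Sum>\<rho>\<in>?P. \<Sum>i<n. jps_weight H n \<rho> i * (?ind \<rho> \<omega> * K (t - X i \<omega>))) \<partial>M)"
    by (intro integral_cong_AE AE_jps_est_eq_sum_rank_patterns borel_measurable_jps_est) measurable
  also have "\<dots> = (\<Sum>\<rho>\<in>?P. \<integral>\<omega>. (\<Sum>i<n. jps_weight H n \<rho> i * (?ind \<rho> \<omega> * K (t - X i \<omega>))) \<partial>M)"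
    using int by (intro Bochner_Integration.integral_sum Bochner_Integration.integrable_sum
        integrable_mult_right) auto
  also have "\<dots> = (\<Sum>\<rho>\<in>?P. \<Sum>i<n. jps_weight H n \<rho> i * (\<integral>\<omega>. ?ind \<rho> \<omega> * K (t - X i \<omega>) \<partial>M))"
    using int by (intro sum.cong refl) (simp add: Bochner_Integration.integral_sum)
  also have "\<dots> = (\<Sum>\<rho>\<in>?P. \<Sum>i<n. jps_weight H n \<rho> i * (\<mu> (\<rho> i) / real H ^ n))"
  proof (intro sum.cong refl)
    fix \<rho> i assume "\<rho> \<in> ?P" and "i \<in> {..<n}"
    then show "jps_weight H n \<rho> i * (\<integral>\<omega>. ?ind \<rho> \<omega> * K (t - X i \<omega>) \<partial>M)
        = jps_weight H n \<rho> i * (\<mu> (\<rho> i) / real H ^ n)"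
      using integral_rank_pattern[OF _ _ Kt K_bound] by (simp add: \<mu>_def)
  qed
  also have "\<dots> = (\<Sum>\<rho>\<in>?P. \<Sum>r=1..H. jps_W H n \<rho> r * (\<mu> r / real H ^ n))"
    by (intro sum.cong refl sum_jps_weight_stratumwise) (simp add: PiE_iff)
  also have "\<dots> = (\<Sum>r=1..H. \<mu> r / real H ^ n * (\<Sum>\<rho>\<in>?P. jps_W H n \<rho> r))"
    by (subst sum.swap) (simp add: sum_distrib_left mult.commute)
  also have "\<dots> = (\<Sum>r=1..H. \<mu> r / real H ^ n * (real H ^ n / real H))"
    by (intro sum.cong refl) (simp only: sum_jps_W_PiE[OF n])
  also have "\<dots> = (1 / real H) * (\<Sum>r=1..H. \<mu> r)"
    using H_pos by (simp add: sum_distrib_left)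
  finally show ?thesis
    by (simp add: \<mu>_def)
qed

end

theorem mainTheorem1:
  fixes H n :: nat
    and M :: "'a measure" and X :: "nat \<Rightarrow> 'a \<Rightarrow> real" and R :: "nat \<Rightarrow> 'a \<Rightarrow> nat"
    and N :: "'b measure" and Y :: "nat \<Rightarrow> 'b \<Rightarrow> real"
    and F :: "real \<Rightarrow> real" and Fr :: "nat \<Rightarrow> real \<Rightarrow> real"
    and K :: "real \<Rightarrow> real" and t :: real
  assumes H: "H \<ge> 2" and n: "n \<ge> 1"
    and cdf_Fr: "\<And>r. r \<in> {1..H} \<Longrightarrow> is_cdf (Fr r)"
    and cdf_F: "is_cdf F"
    and consistent: "\<And>s. F s = (1 / real H) * (\<Sum>r=1..H. Fr r s)"
    and cdf_K: "is_cdf K"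
    and M: "prob_space M"
    and indep_JPS: "prob_space.indep_vars M (\<lambda>_. borel \<Otimes>\<^sub>M count_space UNIV)
                      (\<lambda>i \<omega>. (X i \<omega>, R i \<omega>)) {..<n}"
    and R_range: "\<And>i. i < n \<Longrightarrow> measure M {\<omega> \<in> space M. R i \<omega> \<in> {1..H}} = 1"
    and law_JPS: "\<And>i r s. i < n \<Longrightarrow> r \<in> {1..H} \<Longrightarrow>
                     measure M {\<omega> \<in> space M. X i \<omega> \<le> s \<and> R i \<omega> = r} = Fr r s / real H"
    and N: "prob_space N"
    and indep_SRS: "prob_space.indep_vars N (\<lambda>_. borel) Y {..<n}"
    and law_SRS: "\<And>i s. i < n \<Longrightarrow> measure N {\<omega> \<in> space N. Y i \<omega> \<le> s} = F s"
  shows "(\<integral>\<omega>. jps_est H n K (\<lambda>i. X i \<omega>) (\<lambda>i. R i \<omega>) t \<partial>M)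
           = (1 / real H) * (\<Sum>r=1..H. \<integral>x. K (t - x) \<partial>(interval_measure (Fr r)))
       \<and> (1 / real H) * (\<Sum>r=1..H. \<integral>x. K (t - x) \<partial>(interval_measure (Fr r)))
           = (\<integral>x. K (t - x) \<partial>(interval_measure F))
       \<and> (\<integral>x. K (t - x) \<partial>(interval_measure F))
           = (\<integral>\<omega>. srs_est n K (\<lambda>i. Y i \<omega>) t \<partial>N)"
proof -
  have K: "K \<in> borel_measurable borel" "\<And>x. \<bar>K x\<bar> \<le> 1"
    using cdf_K by (simp_all add: borel_measurable_is_cdf abs_is_cdf_le_1)
  have Kt: "(\<lambda>x. K (t - x)) \<in> borel_measurable borel" "\<And>x. \<bar>K (t - x)\<bar> \<le> 1"
    using K by simp_all
  have Y: "\<And>i. i < n \<Longrightarrow> Y i \<in> borel_measurable N"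
    using indep_SRS by (auto simp: prob_space.indep_vars_def[OF N])
  interpret J: jps_sample M H n X R Fr
    using M H cdf_Fr indep_JPS R_range law_JPS by (intro jps_sample.intro jps_sample_axioms.intro) auto
  show ?thesis
    using J.integral_jps_est[OF n K] J.integral_interval_measure_mixture[OF _ cdf_F consistent Kt]
      integral_srs_est[OF N n cdf_F Y law_SRS K] n
    by simp
qed

end
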